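(* Let $G$ be a smallest counterexample to the statement "every $n$-vertex triangulation has an independent dominating set of size at most $n/3$" (i.e., $G$ is a triangulation on $n$ vertices with no independent dominating set of size at most $n/3$, and every triangulation with fewer vertices has an independent dominating set of size at most one third of its number of vertices). Let $\psi$ be a partial proper $4$-coloring of $G$ such that every uncolored vertex has degree exactly four, $|\psi[v]|\ge 3$ for every vertex $v$, and $|\psi[v]|=4$ for every vertex $v$ of degree at most five, and let $\overline{C}$ be the set of uncolored vertices. Then the bad subgraph $G_B$ of $G$ has a vertex cover of size at most $|\overline{C}|$.
   Context: Graphs are finite, undirected and simple. A triangulation is a planar graph embedded in the plane such that every face, including the outer face, is bounded by a cycle on three edges. A set $S\subseteq V(G)$ is an independent dominating set if no two vertices of $S$ are adjacent and every vertex not in $S$ has a neighbor in $S$. A partial proper $4$-coloring assigns to some vertices colors from $\{1,2,3,4\}$ with adjacent colored vertices receiving distinct colors. $\psi[v]$ is the set of colors used by $\psi$ on the closed neighborhood $N[v]$. For $i\in\{1,2,3,4\}$, $C_i$ is the set of vertices of color $i$, and $U_i$ is the set of vertices of $G$ not in $C_i$ and having no neighbor in $C_i$. A bad edge is an edge of $G$ between $U_i$ and $U_j$ for some $i\neq j$; letting $E_B$ be the set of bad edges and $V_B$ the set of their endpoints, the bad subgraph is $G_B=(V_B,E_B)$. A vertex cover of $G_B$ is a set of vertices meeting every edge of $G_B$. *)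

theory Defs
  imports Main
begin

definition simple_graph :: "'a set \<Rightarrow> ('a \<Rightarrow> 'a \<Rightarrow> bool) \<Rightarrow> bool" where
  "simple_graph V E \<longleftrightarrow> finite V \<and>
     (\<forall>u v. E u v \<longrightarrow> u \<in> V \<and> v \<in> V \<and> u \<noteq> v \<and> E v u)"

definition connected_graph :: "'a set \<Rightarrow> ('a \<Rightarrow> 'a \<Rightarrow> bool) \<Rightarrow> bool" where
  "connected_graph V E \<longleftrightarrow> (\<forall>u\<in>V. \<forall>v\<in>V. E\<^sup>*\<^sup>* u v)"

definition edges :: "('a \<Rightarrow> 'a \<Rightarrow> bool) \<Rightarrow> 'a set set" where
  "edges E = {{u, v} | u v. E u v}"

definition nbrs :: "('a \<Rightarrow> 'a \<Rightarrow> bool) \<Rightarrow> 'a \<Rightarrow> 'a set" where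
  "nbrs E v = {u. E v u}"

definition degree :: "('a \<Rightarrow> 'a \<Rightarrow> bool) \<Rightarrow> 'a \<Rightarrow> nat" where
  "degree E v = card (nbrs E v)"

definition darts :: "('a \<Rightarrow> 'a \<Rightarrow> bool) \<Rightarrow> ('a \<times> 'a) set" where
  "darts E = {(u, v). E u v}"

definition rotation_system :: "('a \<Rightarrow> 'a \<Rightarrow> bool) \<Rightarrow> ('a \<times> 'a \<Rightarrow> 'a \<times> 'a) \<Rightarrow> bool" where
  "rotation_system E \<sigma> \<longleftrightarrow> bij_betw \<sigma> (darts E) (darts E) \<and>
     (\<forall>d\<in>darts E. fst (\<sigma> d) = fst d) \<and>
     (\<forall>u v w. E u v \<longrightarrow> E u w \<longrightarrow> (\<exists>n. (\<sigma> ^^ n) (u, v) = (u, w)))"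

definition face_perm :: "('a \<times> 'a \<Rightarrow> 'a \<times> 'a) \<Rightarrow> 'a \<times> 'a \<Rightarrow> 'a \<times> 'a" where
  "face_perm \<sigma> d = \<sigma> (snd d, fst d)"

definition orbit :: "('b \<Rightarrow> 'b) \<Rightarrow> 'b \<Rightarrow> 'b set" where
  "orbit f x = {(f ^^ n) x | n. True}"

definition faces :: "('a \<Rightarrow> 'a \<Rightarrow> bool) \<Rightarrow> ('a \<times> 'a \<Rightarrow> 'a \<times> 'a) \<Rightarrow> ('a \<times> 'a) set set" where
  "faces E \<sigma> = orbit (face_perm \<sigma>) ` darts E"

(* A triangulation: a connected simple graph with a plane (genus 0, by Euler's formula)
   combinatorial embedding in which every face (including the outer one) is bounded by
   a closed walk of length 3, i.e. (the graph being simple) by a cycle on three edges. *)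
definition triangulation :: "'a set \<Rightarrow> ('a \<Rightarrow> 'a \<Rightarrow> bool) \<Rightarrow> bool" where
  "triangulation V E \<longleftrightarrow> simple_graph V E \<and> connected_graph V E \<and>
     (\<exists>\<sigma>. rotation_system E \<sigma> \<and>
          (\<forall>F\<in>faces E \<sigma>. card F = 3) \<and>
          int (card V) - int (card (edges E)) + int (card (faces E \<sigma>)) = 2)"

definition independent_dominating :: "'a set \<Rightarrow> ('a \<Rightarrow> 'a \<Rightarrow> bool) \<Rightarrow> 'a set \<Rightarrow> bool" where
  "independent_dominating V E S \<longleftrightarrow> S \<subseteq> V \<and>
     (\<forall>u\<in>S. \<forall>v\<in>S. \<not> E u v) \<and>
     (\<forall>v\<in>V - S. \<exists>u\<in>S. E v u)"

(* partial proper 4-colouring: None = uncoloured, colours are 1..4 *)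
definition partial_proper_4col :: "'a set \<Rightarrow> ('a \<Rightarrow> 'a \<Rightarrow> bool) \<Rightarrow> ('a \<Rightarrow> nat option) \<Rightarrow> bool" where
  "partial_proper_4col V E \<psi> \<longleftrightarrow>
     (\<forall>v\<in>V. \<forall>c. \<psi> v = Some c \<longrightarrow> c \<in> {1..4}) \<and>
     (\<forall>u v c. E u v \<longrightarrow> \<psi> u = Some c \<longrightarrow> \<psi> v \<noteq> Some c)"

(* psi[v]: colours used on the closed neighbourhood N[v] *)
definition cols_closed :: "('a \<Rightarrow> 'a \<Rightarrow> bool) \<Rightarrow> ('a \<Rightarrow> nat option) \<Rightarrow> 'a \<Rightarrow> nat set" where
  "cols_closed E \<psi> v = {c. \<exists>u\<in>insert v (nbrs E v). \<psi> u = Some c}"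

definition colour_class :: "'a set \<Rightarrow> ('a \<Rightarrow> nat option) \<Rightarrow> nat \<Rightarrow> 'a set" where
  "colour_class V \<psi> i = {v\<in>V. \<psi> v = Some i}"

definition U_set :: "'a set \<Rightarrow> ('a \<Rightarrow> 'a \<Rightarrow> bool) \<Rightarrow> ('a \<Rightarrow> nat option) \<Rightarrow> nat \<Rightarrow> 'a set" where
  "U_set V E \<psi> i = {v\<in>V. v \<notin> colour_class V \<psi> i \<and> (\<forall>u. E v u \<longrightarrow> u \<notin> colour_class V \<psi> i)}"

definition bad_edges :: "'a set \<Rightarrow> ('a \<Rightarrow> 'a \<Rightarrow> bool) \<Rightarrow> ('a \<Rightarrow> nat option) \<Rightarrow> 'a set set" where
  "bad_edges V E \<psi> = {{u, v} | u v i j. E u v \<and> i \<in> {1..4} \<and> j \<in> {1..4} \<and> i \<noteq> j \<and>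
                         u \<in> U_set V E \<psi> i \<and> v \<in> U_set V E \<psi> j}"

definition bad_vertices :: "'a set \<Rightarrow> ('a \<Rightarrow> 'a \<Rightarrow> bool) \<Rightarrow> ('a \<Rightarrow> nat option) \<Rightarrow> 'a set" where
  "bad_vertices V E \<psi> = \<Union> (bad_edges V E \<psi>)"

definition uncoloured :: "'a set \<Rightarrow> ('a \<Rightarrow> nat option) \<Rightarrow> 'a set" where
  "uncoloured V \<psi> = {v\<in>V. \<psi> v = None}"

end

theory Submission
  imports Defs
begin

text \<open>
  Let \<open>uv\<close> be a bad edge with \<open>u \<in> U_i\<close>, \<open>v \<in> U_j\<close>. A vertex of degree at most 5 sees all
  four colours, so it lies in no \<open>U_k\<close>; hence \<open>u\<close> and \<open>v\<close> have degree greater than 5, are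
  therefore coloured, say with \<open>a\<close> and \<open>b\<close>, and \<open>a, b, i, j\<close> are the four colours. A common
  neighbour of \<open>u\<close> and \<open>v\<close> can carry none of them, so it is uncoloured. In a triangulation
  the two faces at \<open>uv\<close> give two distinct common neighbours (the successor and the predecessor
  of \<open>v\<close> in the rotation at \<open>u\<close>), so every bad vertex has two uncoloured neighbours. As
  uncoloured vertices have degree 4, double counting gives \<open>|V_B| \<le> 2 |C|\<close>, \<open>C\<close> the set of
  uncoloured vertices.

  For a colour \<open>k\<close> let \<open>S_k\<close> be the set of bad vertices coloured \<open>k\<close> or lying in \<open>U_k\<close>. Since
  the four colours at a bad edge include \<open>k\<close>, every \<open>S_k\<close> is a vertex cover of \<open>G_B\<close>; since a
  bad vertex sees at least three colours, it lies in at most two of the \<open>S_k\<close>. Hence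
  \<open>\<Sum>k. |S_k| \<le> 2 |V_B| \<le> 4 |C|\<close> and some \<open>S_k\<close> has at most \<open>|C|\<close> elements.
\<close>

lemma card_orbit_le_period:
  assumes "(f ^^ n) x = x" and "0 < n"
  shows "finite (orbit f x)" and "card (orbit f x) \<le> n"
proof -
  have "(f ^^ m) x \<in> (\<lambda>i. (f ^^ i) x) ` {..<n}" for m
    using funpow_mod_eq[of n f x m] assms by (metis image_eqI lessThan_iff mod_less_divisor)
  then have "orbit f x = (\<lambda>i. (f ^^ i) x) ` {..<n}"
    unfolding orbit_def by blast
  then show "finite (orbit f x)" and "card (orbit f x) \<le> n"
    using card_image_le[of "{..<n}" "\<lambda>i. (f ^^ i) x"] by simp_all
qed

lemma card_orbit_eq_3_period:
  assumes inj: "inj_on f D" and maps: "f ` D \<subseteq> D" and "x \<in> D"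
    and card3: "card (orbit f x) = 3"
  shows "(f ^^ 3) x = x"
proof -
  define y where "y n = (f ^^ n) x" for n
  have y_Suc: "y (Suc n) = f (y n)" for n
    by (simp add: y_def)
  have y_in: "y n \<in> D" for n
    by (induction n) (use maps \<open>x \<in> D\<close> in \<open>auto simp: y_def\<close>)
  have y_eq: "y m = y n" if "y (Suc m) = y (Suc n)" for m n
    using inj that y_in by (simp add: y_Suc inj_on_def)
  have "y 1 \<noteq> y 0" and "y 2 \<noteq> y 0"
    using card_orbit_le_period(2)[where n=1 and f=f and x=x]
      card_orbit_le_period(2)[where n=2 and f=f and x=x] card3
    by (auto simp: y_def)
  moreover have "y 2 \<noteq> y 1"
    using y_eq[of 1 0] \<open>y 1 \<noteq> y 0\<close> by (auto simp: numeral_eq_Suc)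
  moreover have "finite (orbit f x)"
    using card3 card.infinite by fastforce
  moreover have "{y 0, y 1, y 2} \<subseteq> orbit f x"
    unfolding orbit_def y_def by blast
  ultimately have "orbit f x = {y 0, y 1, y 2}"
    using card3 by (intro card_subset_eq[symmetric]) auto
  moreover have "y 3 \<in> orbit f x"
    unfolding orbit_def y_def by blast
  moreover have "y 3 \<noteq> y 1" and "y 3 \<noteq> y 2"
    using y_eq[of 2 0] y_eq[of 2 1] \<open>y 2 \<noteq> y 0\<close> \<open>y 2 \<noteq> y 1\<close>
    by (auto simp: numeral_eq_Suc)
  ultimately show ?thesis
    by (auto simp: y_def)
qed

lemma rotation_system_successor:
  assumes "rotation_system E \<sigma>" and "E u v"
  obtains x where "\<sigma> (u, v) = (u, x)" and "E u x"
proof -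
  have "(u, v) \<in> darts E"
    using assms(2) by (simp add: darts_def)
  then have "\<sigma> (u, v) \<in> darts E" and "fst (\<sigma> (u, v)) = u"
    using assms(1) bij_betw_apply unfolding rotation_system_def by fastforce+
  then show ?thesis
    using that by (cases "\<sigma> (u, v)") (auto simp: darts_def)
qed

lemma rotation_system_predecessor:
  assumes "rotation_system E \<sigma>" and "E u v"
  obtains w where "\<sigma> (u, w) = (u, v)" and "E u w"
proof -
  have "(u, v) \<in> \<sigma> ` darts E"
    using assms bij_betw_imp_surj_on unfolding rotation_system_def
    by (fastforce simp: darts_def)
  then obtain d where "d \<in> darts E" and "\<sigma> d = (u, v)"
    by (rule imageE) simp
  moreover have "fst (\<sigma> d) = fst d"
    using assms(1) \<open>d \<in> darts E\<close> unfolding rotation_system_def by blast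
  ultimately show ?thesis
    using that by (cases d) (auto simp: darts_def)
qed

lemma degree_le_rotation_period:
  assumes rot: "rotation_system E \<sigma>" and "E u v"
    and period: "(\<sigma> ^^ n) (u, v) = (u, v)" and "0 < n"
  shows "degree E u \<le> n"
proof -
  have "nbrs E u \<subseteq> snd ` orbit \<sigma> (u, v)"
  proof
    fix w
    assume "w \<in> nbrs E u"
    then obtain m where "(\<sigma> ^^ m) (u, v) = (u, w)"
      using rot \<open>E u v\<close> unfolding rotation_system_def nbrs_def by blast
    then show "w \<in> snd ` orbit \<sigma> (u, v)"
      unfolding orbit_def by (metis (mono_tags) mem_Collect_eq image_eqI snd_conv)
  qed
  then have "degree E u \<le> card (snd ` orbit \<sigma> (u, v))"
    unfolding degree_def
    using card_orbit_le_period(1)[OF period \<open>0 < n\<close>] by (intro card_mono) auto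
  also have "\<dots> \<le> n"
    using card_orbit_le_period[OF period \<open>0 < n\<close>] card_image_le le_trans by blast
  finally show ?thesis .
qed

lemma simple_graph_edgeD:
  "simple_graph V E \<Longrightarrow> E u v \<Longrightarrow> u \<in> V \<and> v \<in> V \<and> u \<noteq> v \<and> E v u"
  unfolding simple_graph_def by blast

lemma simple_graph_finite_nbrs: "simple_graph V E \<Longrightarrow> finite (nbrs E v)"
  unfolding simple_graph_def nbrs_def
  by (metis (no_types, lifting) finite_subset mem_Collect_eq subsetI)

locale triangulated_rotation =
  fixes V :: "'a set" and E :: "'a \<Rightarrow> 'a \<Rightarrow> bool" and \<sigma> :: "'a \<times> 'a \<Rightarrow> 'a \<times> 'a"
  assumes simple: "simple_graph V E"
    and rotation: "rotation_system E \<sigma>"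
    and triangular_faces: "\<forall>F\<in>faces E \<sigma>. card F = 3"
begin

lemma edge_sym: "E u v \<Longrightarrow> E v u"
  using simple_graph_edgeD[OF simple] by blast

lemma face_perm_maps_darts: "face_perm \<sigma> ` darts E \<subseteq> darts E"
proof (rule image_subsetI)
  fix d
  assume "d \<in> darts E"
  then obtain a b where d: "d = (a, b)" and "E b a"
    by (auto simp: darts_def dest: edge_sym)
  then obtain x where "\<sigma> (b, a) = (b, x)" and "E b x"
    using rotation_system_successor[OF rotation] by metis
  then show "face_perm \<sigma> d \<in> darts E"
    by (simp add: d face_perm_def darts_def)
qed

lemma inj_on_face_perm: "inj_on (face_perm \<sigma>) (darts E)"
proof (rule inj_onI)
  fix d d'
  assume "d \<in> darts E" "d' \<in> darts E" and eq: "face_perm \<sigma> d = face_perm \<sigma> d'"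
  then have "prod.swap d \<in> darts E" and "prod.swap d' \<in> darts E"
    by (auto simp: darts_def dest: edge_sym)
  moreover have "inj_on \<sigma> (darts E)"
    using rotation unfolding rotation_system_def bij_betw_def by blast
  ultimately have "prod.swap d = prod.swap d'"
    using eq by (auto simp: face_perm_def prod.swap_def inj_on_def)
  then show "d = d'"
    by (metis swap_swap)
qed

lemma rotation_successor_common_nbr:
  assumes "E u v" and succ: "\<sigma> (u, v) = (u, x)"
  shows "E v x"
proof -
  let ?f = "face_perm \<sigma>"
  have vu: "(v, u) \<in> darts E"
    using assms(1) edge_sym by (simp add: darts_def)
  obtain x' where "\<sigma> (u, v) = (u, x')" and "E u x'"
    by (rule rotation_system_successor[OF rotation \<open>E u v\<close>])
  with succ have "E x u"
    using edge_sym by simp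
  then obtain y where y: "\<sigma> (x, u) = (x, y)" and "E x y"
    by (rule rotation_system_successor[OF rotation])
  then obtain z where z: "\<sigma> (y, x) = (y, z)"
    using rotation_system_successor[OF rotation edge_sym] by blast
  \<comment> \<open>\<open>(v, u)\<close>, \<open>(u, x)\<close>, \<open>(x, y)\<close> are consecutive darts of a triangular face,
    so \<open>y = v\<close>.\<close>
  have "card (orbit ?f (v, u)) = 3"
    using triangular_faces vu unfolding faces_def by blast
  then have "(?f ^^ 3) (v, u) = (v, u)"
    using card_orbit_eq_3_period[OF inj_on_face_perm face_perm_maps_darts vu] by blast
  moreover have "(?f ^^ 3) (v, u) = (y, z)"
    by (simp add: numeral_3_eq_3 face_perm_def succ y z)
  ultimately show ?thesis
    using \<open>E x y\<close> edge_sym by simp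
qed

lemma card_common_nbrs:
  assumes "E u v" and "2 < degree E u"
  shows "2 \<le> card (nbrs E u \<inter> nbrs E v)"
proof -
  obtain x where succ: "\<sigma> (u, v) = (u, x)" and "E u x"
    by (rule rotation_system_successor[OF rotation \<open>E u v\<close>])
  obtain w where pred: "\<sigma> (u, w) = (u, v)" and "E u w"
    by (rule rotation_system_predecessor[OF rotation \<open>E u v\<close>])
  have "E v x"
    using rotation_successor_common_nbr[OF \<open>E u v\<close> succ] .
  have "E w v"
    using rotation_successor_common_nbr[OF \<open>E u w\<close> pred] .
  have "x \<noteq> w"
  proof
    assume "x = w"
    then have "(\<sigma> ^^ 2) (u, v) = (u, v)"
      by (simp add: numeral_2_eq_2 succ pred)
    then have "degree E u \<le> 2"
      by (rule degree_le_rotation_period[OF rotation \<open>E u v\<close>]) simp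
    then show False
      using \<open>2 < degree E u\<close> by simp
  qed
  have "{x, w} \<subseteq> nbrs E u \<inter> nbrs E v"
    using \<open>E u x\<close> \<open>E v x\<close> \<open>E u w\<close> \<open>E w v\<close> edge_sym by (auto simp: nbrs_def)
  then have "card {x, w} \<le> card (nbrs E u \<inter> nbrs E v)"
    using simple_graph_finite_nbrs[OF simple] by (intro card_mono) auto
  then show ?thesis
    using \<open>x \<noteq> w\<close> by simp
qed

end

lemma triangulation_card_common_nbrs:
  assumes "triangulation V E" and "E u v" and "2 < degree E u"
  shows "2 \<le> card (nbrs E u \<inter> nbrs E v)"
proof -
  obtain \<sigma> where "triangulated_rotation V E \<sigma>"
    using assms(1) unfolding triangulation_def triangulated_rotation_def by blast
  then show ?thesis
    using assms(2,3) by (rule triangulated_rotation.card_common_nbrs)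
qed

locale rich_colouring =
  fixes V :: "'a set" and E :: "'a \<Rightarrow> 'a \<Rightarrow> bool" and \<psi> :: "'a \<Rightarrow> nat option"
  assumes triangulation: "triangulation V E"
    and proper_colouring: "partial_proper_4col V E \<psi>"
    and uncoloured_degree: "\<forall>v\<in>V. \<psi> v = None \<longrightarrow> degree E v = 4"
    and three_colours: "\<forall>v\<in>V. card (cols_closed E \<psi> v) \<ge> 3"
    and four_colours: "\<forall>v\<in>V. degree E v \<le> 5 \<longrightarrow> card (cols_closed E \<psi> v) = 4"
begin

abbreviation U :: "nat \<Rightarrow> 'a set" where
  "U \<equiv> U_set V E \<psi>"

lemma simple: "simple_graph V E"
  using triangulation unfolding triangulation_def by blast

lemmas edgeD = simple_graph_edgeD[OF simple]
lemmas finite_nbrs = simple_graph_finite_nbrs[OF simple]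

lemma finite_V: "finite V"
  using simple unfolding simple_graph_def by blast

lemma colour_range: "v \<in> V \<Longrightarrow> \<psi> v = Some c \<Longrightarrow> c \<in> {1..4}"
  using proper_colouring unfolding partial_proper_4col_def by blast

lemma colour_proper: "E u v \<Longrightarrow> \<psi> u = Some c \<Longrightarrow> \<psi> v \<noteq> Some c"
  using proper_colouring unfolding partial_proper_4col_def by blast

lemma cols_closedI: "\<psi> w = Some c \<Longrightarrow> w = v \<or> E v w \<Longrightarrow> c \<in> cols_closed E \<psi> v"
  by (auto simp: cols_closed_def nbrs_def)

lemma cols_closed_subset: "v \<in> V \<Longrightarrow> cols_closed E \<psi> v \<subseteq> {1..4}"
  unfolding cols_closed_def nbrs_def using colour_range edgeD by blast

lemma mem_U_iff: "u \<in> U i \<longleftrightarrow> u \<in> V \<and> i \<notin> cols_closed E \<psi> u"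
  using edgeD by (auto simp: U_set_def colour_class_def cols_closed_def nbrs_def)

lemma mem_U_degree_gt_5:
  assumes "u \<in> U i" and "i \<in> {1..4}"
  shows "5 < degree E u"
proof (rule ccontr)
  assume "\<not> 5 < degree E u"
  moreover have "u \<in> V"
    using assms(1) mem_U_iff by blast
  ultimately have "card (cols_closed E \<psi> u) = card {1..4::nat}"
    using four_colours by simp
  then have "cols_closed E \<psi> u = {1..4}"
    using cols_closed_subset[OF \<open>u \<in> V\<close>] by (intro card_subset_eq) auto
  then show False
    using assms mem_U_iff by blast
qed

lemma mem_U_coloured: "u \<in> U i \<Longrightarrow> i \<in> {1..4} \<Longrightarrow> \<psi> u \<noteq> None"
  using mem_U_degree_gt_5 uncoloured_degree mem_U_iff by fastforce

definition bad_pair :: "'a \<Rightarrow> 'a \<Rightarrow> nat \<Rightarrow> nat \<Rightarrow> bool" where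
  "bad_pair u v i j \<longleftrightarrow> E u v \<and> i \<in> {1..4} \<and> j \<in> {1..4} \<and> i \<noteq> j \<and> u \<in> U i \<and> v \<in> U j"

lemma bad_pair_sym: "bad_pair u v i j \<Longrightarrow> bad_pair v u j i"
  using edgeD unfolding bad_pair_def by blast

lemma bad_edges_eq: "bad_edges V E \<psi> = {{u, v} | u v i j. bad_pair u v i j}"
  unfolding bad_edges_def bad_pair_def by simp

lemma mem_bad_vertices_iff: "u \<in> bad_vertices V E \<psi> \<longleftrightarrow> (\<exists>v i j. bad_pair u v i j)"
  unfolding bad_vertices_def bad_edges_eq using bad_pair_sym by blast

lemma bad_vertices_subset: "bad_vertices V E \<psi> \<subseteq> V"
  using mem_bad_vertices_iff edgeD unfolding bad_pair_def by blast

lemma bad_pair_colours: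
  assumes bad: "bad_pair u v i j" and "\<psi> u = Some a" and "\<psi> v = Some b"
  shows "{a, b, i, j} = {1..4}"
proof (rule card_subset_eq)
  have "E u v" "E v u" and "u \<in> U i" "v \<in> U j"
    using bad edgeD unfolding bad_pair_def by blast+
  then have "a \<noteq> i" "b \<noteq> i" "a \<noteq> j" "b \<noteq> j"
    using assms(2,3) cols_closedI mem_U_iff by metis+
  moreover have "a \<noteq> b" "i \<noteq> j"
    using colour_proper[OF \<open>E u v\<close> \<open>\<psi> u = Some a\<close>] \<open>\<psi> v = Some b\<close> bad
    unfolding bad_pair_def by auto
  ultimately show "card {a, b, i, j} = card {1..4::nat}"
    by auto
  show "{a, b, i, j} \<subseteq> {1..4}"
    using bad assms(2,3) colour_range edgeD unfolding bad_pair_def by blast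
qed simp

lemma bad_pair_common_nbr_uncoloured:
  assumes bad: "bad_pair u v i j" and "E u w" and "E v w"
  shows "\<psi> w = None"
proof (rule ccontr)
  assume "\<psi> w \<noteq> None"
  then obtain m where m: "\<psi> w = Some m"
    by blast
  obtain a b where a: "\<psi> u = Some a" and b: "\<psi> v = Some b"
    using bad mem_U_coloured unfolding bad_pair_def by blast
  have "m \<in> {a, b, i, j}"
    using bad_pair_colours[OF bad a b] colour_range[OF _ m] edgeD \<open>E u w\<close> by blast
  moreover have "m \<noteq> a" "m \<noteq> b"
    using colour_proper \<open>E u w\<close> \<open>E v w\<close> a b m by metis+
  moreover have "m \<noteq> i" "m \<noteq> j"
    using bad m \<open>E u w\<close> \<open>E v w\<close> cols_closedI mem_U_iff unfolding bad_pair_def by metis+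
  ultimately show False
    by blast
qed

lemma bad_vertex_uncoloured_nbrs:
  assumes "u \<in> bad_vertices V E \<psi>"
  shows "2 \<le> card (nbrs E u \<inter> uncoloured V \<psi>)"
proof -
  obtain v i j where bad: "bad_pair u v i j"
    using assms mem_bad_vertices_iff by blast
  then have "2 \<le> card (nbrs E u \<inter> nbrs E v)"
    using triangulation_card_common_nbrs[OF triangulation] mem_U_degree_gt_5
    unfolding bad_pair_def by fastforce
  also have "\<dots> \<le> card (nbrs E u \<inter> uncoloured V \<psi>)"
    using bad_pair_common_nbr_uncoloured[OF bad] edgeD finite_nbrs
    by (intro card_mono) (auto simp: nbrs_def uncoloured_def)
  finally show ?thesis .
qed

lemma card_bad_vertices_le: "card (bad_vertices V E \<psi>) \<le> 2 * card (uncoloured V \<psi>)"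
proof -
  let ?B = "bad_vertices V E \<psi>" and ?W = "uncoloured V \<psi>"
  have "finite ?B" and "finite ?W"
    using bad_vertices_subset finite_V finite_subset unfolding uncoloured_def by auto
  have "2 * card ?B \<le> (\<Sum>u\<in>?B. card {w\<in>?W. E u w})"
    using bad_vertex_uncoloured_nbrs sum_bounded_below[of ?B 2 "\<lambda>u. card {w\<in>?W. E u w}"]
    by (simp add: nbrs_def Int_def conj_commute mult.commute)
  also have "\<dots> = (\<Sum>w\<in>?W. card {u\<in>?B. E u w})"
    using sum.swap_restrict[OF \<open>finite ?B\<close> \<open>finite ?W\<close>, of "\<lambda>_ _. 1::nat" E] by simp
  also have "\<dots> \<le> (\<Sum>w\<in>?W. 4)"
  proof (rule sum_mono)
    fix w
    assume "w \<in> ?W"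
    then have "degree E w = 4"
      using uncoloured_degree unfolding uncoloured_def by blast
    moreover have "{u\<in>?B. E u w} \<subseteq> nbrs E w"
      using edgeD by (auto simp: nbrs_def)
    ultimately show "card {u\<in>?B. E u w} \<le> 4"
      using finite_nbrs card_mono unfolding degree_def by metis
  qed
  finally show ?thesis
    by simp
qed

lemma card_colour_classes_le:
  assumes "u \<in> bad_vertices V E \<psi>"
  shows "card {k\<in>{1..4}. \<psi> u = Some k \<or> u \<in> U k} \<le> 2"
proof -
  have "u \<in> V"
    using assms bad_vertices_subset by blast
  obtain a where a: "\<psi> u = Some a"
    using assms mem_U_coloured mem_bad_vertices_iff unfolding bad_pair_def by blast
  have "3 \<le> card (cols_closed E \<psi> u)"
    using three_colours \<open>u \<in> V\<close> by blast
  then have missing: "card ({1..4::nat} - cols_closed E \<psi> u) \<le> 1"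
    using cols_closed_subset[OF \<open>u \<in> V\<close>] by (simp add: card_Diff_subset finite_subset)
  have "card {k\<in>{1..4}. \<psi> u = Some k \<or> u \<in> U k} \<le> card (insert a ({1..4} - cols_closed E \<psi> u))"
    using a mem_U_iff by (intro card_mono) auto
  also have "\<dots> \<le> 2"
    using missing by (simp add: card_insert_if)
  finally show ?thesis .
qed

definition colour_cover :: "nat \<Rightarrow> 'a set" where
  "colour_cover k = {u \<in> bad_vertices V E \<psi>. \<psi> u = Some k \<or> u \<in> U k}"

lemma colour_cover_subset: "colour_cover k \<subseteq> bad_vertices V E \<psi>"
  unfolding colour_cover_def by blast

lemma colour_cover_meets_bad_edges:
  assumes "k \<in> {1..4}" and "e \<in> bad_edges V E \<psi>"
  shows "e \<inter> colour_cover k \<noteq> {}"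
proof -
  obtain u v i j where e: "e = {u, v}" and bad: "bad_pair u v i j"
    using assms(2) unfolding bad_edges_eq by blast
  obtain a b where a: "\<psi> u = Some a" and b: "\<psi> v = Some b"
    using bad mem_U_coloured unfolding bad_pair_def by blast
  have "k \<in> {a, b, i, j}"
    using bad_pair_colours[OF bad a b] assms(1) by blast
  moreover have "u \<in> bad_vertices V E \<psi>" and "v \<in> bad_vertices V E \<psi>"
    using bad bad_pair_sym mem_bad_vertices_iff by blast+
  ultimately show ?thesis
    using e a b bad unfolding colour_cover_def bad_pair_def by auto
qed

lemma sum_card_colour_cover_le:
  "(\<Sum>k\<in>{1..4}. card (colour_cover k)) \<le> 2 * card (bad_vertices V E \<psi>)"
proof -
  let ?B = "bad_vertices V E \<psi>"
  have "finite ?B"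
    using bad_vertices_subset finite_V finite_subset by blast
  have "(\<Sum>k\<in>{1..4}. card (colour_cover k)) = (\<Sum>u\<in>?B. card {k\<in>{1..4}. \<psi> u = Some k \<or> u \<in> U k})"
    using sum.swap_restrict[OF finite_atLeastAtMost \<open>finite ?B\<close>,
        of "\<lambda>_ _. 1::nat" "\<lambda>k u. \<psi> u = Some k \<or> u \<in> U k" 1 4]
    by (simp add: colour_cover_def)
  also have "\<dots> \<le> (\<Sum>u\<in>?B. 2)"
    using card_colour_classes_le by (intro sum_mono) blast
  finally show ?thesis
    by simp
qed

lemma ex_small_colour_cover: "\<exists>k\<in>{1..4}. card (colour_cover k) \<le> card (uncoloured V \<psi>)"
proof (rule ccontr)
  assume "\<not> ?thesis"
  then have "(\<Sum>k\<in>{1..4::nat}. card (uncoloured V \<psi>)) < (\<Sum>k\<in>{1..4}. card (colour_cover k))"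
    by (intro sum_strict_mono) (auto simp: not_le)
  then show False
    using sum_card_colour_cover_le card_bad_vertices_le by simp
qed

end

theorem lemma3:
  fixes V :: "'a set" and E :: "'a \<Rightarrow> 'a \<Rightarrow> bool" and \<psi> :: "'a \<Rightarrow> nat option"
  assumes tri: "triangulation V E"
    and counterex: "\<not> (\<exists>S. independent_dominating V E S \<and> 3 * card S \<le> card V)"
    and minimal: "\<forall>(V' :: nat set) E'. triangulation V' E' \<and> card V' < card V \<longrightarrow>
                    (\<exists>S. independent_dominating V' E' S \<and> 3 * card S \<le> card V')"
    and col: "partial_proper_4col V E \<psi>"
    and unc_deg: "\<forall>v\<in>V. \<psi> v = None \<longrightarrow> degree E v = 4"
    and three: "\<forall>v\<in>V. card (cols_closed E \<psi> v) \<ge> 3"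
    and four: "\<forall>v\<in>V. degree E v \<le> 5 \<longrightarrow> card (cols_closed E \<psi> v) = 4"
  shows "\<exists>S. S \<subseteq> bad_vertices V E \<psi> \<and> (\<forall>e\<in>bad_edges V E \<psi>. e \<inter> S \<noteq> {}) \<and>
             card S \<le> card (uncoloured V \<psi>)"
proof -
  interpret rich_colouring V E \<psi>
    using tri col unc_deg three four by unfold_locales
  obtain k where k: "k \<in> {1..4}" and "card (colour_cover k) \<le> card (uncoloured V \<psi>)"
    using ex_small_colour_cover by blast
  then show ?thesis
    using colour_cover_subset colour_cover_meets_bad_edges[OF k]
    by (intro exI[of _ "colour_cover k"]) blast
qed

end
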